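(* Let $\Omega\subset[0,1]^d$ be a compact convex set with $|\Omega|\ge1/d!$. There exists a constant $\Lambda$ depending only on $d$ such that for any $1\le r\le\infty$ and any $0<\delta\le1$, every $f\in\mathcal{C}_r(\Omega)$ satisfies $|f(x)|\le\Lambda\delta^{-d/r}$ for all $x\in\Omega_\delta$; that is, $\mathcal{C}_r(\Omega)\subset\Lambda\delta^{-d/r}\cdot\mathcal{C}_\infty(\Omega_\delta)$ (restricting functions to $\Omega_\delta$). In fact $\Lambda=\max\{(d\Gamma(d/2)/\pi^{d/2})^{1/r},\ (d!)\,d\,2^{d+2}\}$ works.
   Context: $|\Omega|$ is Lebesgue measure. $\mathcal{C}_r(A)$ is the set of convex functions $f$ on $A$ with $\|f\|_{L^r(A)}\le1$ (for $r=\infty$: $\sup_A|f|\le1$). $\Omega_\delta=\{x\in\Omega:\operatorname{dist}(x,\partial\Omega)\ge\delta\}$. For $r=\infty$, $\delta^{-d/r}=1$. *)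

theory Defs
  imports "HOL-Analysis.Analysis"
begin

definition convex_Lr_ball :: "ereal \<Rightarrow> 'a::euclidean_space set \<Rightarrow> ('a \<Rightarrow> real) \<Rightarrow> bool" where
  "convex_Lr_ball r A f \<longleftrightarrow> convex_on A f \<and>
     (if r = \<infinity> then (\<forall>x\<in>A. \<bar>f x\<bar> \<le> 1)
      else set_nn_integral lebesgue A (\<lambda>x. ennreal (\<bar>f x\<bar> powr real_of_ereal r)) \<le> 1)"

definition inner_set :: "'a::euclidean_space set \<Rightarrow> real \<Rightarrow> 'a set" where
  "inner_set \<Omega> \<delta> = {x\<in>\<Omega>. infdist x (frontier \<Omega>) \<ge> \<delta>}"

definition delta_factor :: "nat \<Rightarrow> ereal \<Rightarrow> real \<Rightarrow> real" where
  "delta_factor d r \<delta> = (if r = \<infinity> then 1 else \<delta> powr (- real d / real_of_ereal r))"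

definition Lambda_const :: "nat \<Rightarrow> ereal \<Rightarrow> real" where
  "Lambda_const d r = max
     (if r = \<infinity> then 1 else (real d * Gamma (real d / 2) / pi powr (real d / 2)) powr (1 / real_of_ereal r))
     (fact d * real d * 2 ^ (d + 2))"

end

theory Submission
  imports Defs
begin

text \<open>Let \<open>f\<close> be convex on \<open>\<Omega>\<close> with \<open>\<integral>\<^sub>\<Omega> \<bar>f\<bar>^r \<le> 1\<close> and let the ball
  \<open>B(x,\<delta>)\<close> lie in \<open>\<Omega>\<close>. Convexity gives \<open>f x \<le> (f y + f (2x - y)) / 2\<close>, so the superlevel
  set \<open>{f \<ge> f x}\<close> fills at least half of \<open>B(x,\<delta>)\<close>, and Markov's inequality yields
  \<open>f(x)^r |B(x,\<delta>)| \<le> 2\<close>; this is where \<open>2 / |B(0,1)| = d \<Gamma>(d/2) / \<pi>^(d/2)\<close> enters.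
  If \<open>f x = -M < 0\<close>, the homothety \<open>y \<mapsto> (x + y) / 2\<close> maps \<open>{f < M/2}\<close> into
  \<open>{f \<le> -M/4}\<close>, so \<open>\<bar>f\<bar> \<ge> M/4\<close> on a set of measure at least \<open>|\<Omega>| / 2^d \<ge> 1 / (2^d d!)\<close>,
  and Markov's inequality bounds \<open>M\<close> independently of \<open>\<delta>\<close>.\<close>

lemma lmeasurable_superlevel_set:
  fixes g :: "'a::euclidean_space \<Rightarrow> real"
  assumes g: "continuous_on U g" and U: "U \<in> lmeasurable"
  shows "{y\<in>U. c \<le> g y} \<in> lmeasurable"
proof -
  have "closedin (top_of_set U) (U \<inter> g -` {c..})"
    by (rule continuous_closedin_preimage[OF g closed_atLeast])
  then have "{y\<in>U. c \<le> g y} \<in> sets lebesgue"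
    using U by (auto simp: Int_def intro: lebesgue_closedin)
  then show ?thesis by (rule fmeasurableI2[OF U, rotated]) auto
qed

lemma Markov_set_nn_integral_powr:
  fixes f :: "'a \<Rightarrow> real"
  assumes S: "S \<in> fmeasurable M" "S \<subseteq> \<Omega>" and t: "0 \<le> t" "\<forall>y\<in>S. t \<le> \<bar>f y\<bar>" and \<rho>: "0 \<le> \<rho>"
  shows "ennreal (t powr \<rho> * measure M S) \<le> set_nn_integral M \<Omega> (\<lambda>x. ennreal (\<bar>f x\<bar> powr \<rho>))"
proof -
  have "ennreal (t powr \<rho> * measure M S) = (\<integral>\<^sup>+x. ennreal (t powr \<rho>) * indicator S x \<partial>M)"
    using S by (simp add: nn_integral_cmult_indicator emeasure_eq_measure2 ennreal_mult)
  also have "\<dots> \<le> (\<integral>\<^sup>+x. ennreal (\<bar>f x\<bar> powr \<rho>) * indicator \<Omega> x \<partial>M)"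
    using S t \<rho> by (intro nn_integral_mono) (auto split: split_indicator intro!: ennreal_leI powr_mono2)
  finally show ?thesis .
qed

lemma ball_subset_of_le_infdist_frontier:
  fixes x :: "'a::euclidean_space"
  assumes "x \<in> \<Omega>" and "\<delta> \<le> infdist x (frontier \<Omega>)"
  shows "ball x \<delta> \<subseteq> \<Omega>"
proof
  fix y assume y: "y \<in> ball x \<delta>"
  show "y \<in> \<Omega>"
  proof (rule ccontr)
    assume "y \<notin> \<Omega>"
    then obtain z where z: "z \<in> closed_segment x y" "z \<in> frontier \<Omega>"
      using connected_Int_frontier[of "closed_segment x y" \<Omega>] assms(1) by auto
    have "infdist x (frontier \<Omega>) \<le> dist x z" by (rule infdist_le[OF z(2)])
    also have "\<dots> \<le> dist x y" using dist_in_closed_segment[OF z(1)] by (simp add: dist_commute)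
    finally show False using y assms(2) by simp
  qed
qed

lemma convex_on_ball_measure_le_superlevel:
  fixes f :: "'a::euclidean_space \<Rightarrow> real"
  assumes cvx: "convex_on (ball x \<delta>) f"
  shows "measure lebesgue (ball x \<delta>) \<le> 2 * measure lebesgue {y\<in>ball x \<delta>. f x \<le> f y}"
proof -
  define U where "U = ball x \<delta>"
  define S where "S = {y\<in>U. f x \<le> f y}"
  define R where "R = {y\<in>U. f x \<le> f (2 *\<^sub>R x - y)}"
  have refl: "2 *\<^sub>R x - y \<in> U" if "y \<in> U" for y
    using that by (simp add: U_def dist_norm scaleR_2 algebra_simps norm_minus_commute)
  have cont: "continuous_on U f"
    using convex_on_continuous[OF _ cvx] by (simp add: U_def)
  have "continuous_on U (\<lambda>y. f (2 *\<^sub>R x - y))"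
    by (rule continuous_on_compose2[OF cont]) (auto intro!: continuous_on_diff continuous_on_const continuous_on_id refl)
  moreover have U: "U \<in> lmeasurable" by (simp add: U_def)
  ultimately have S: "S \<in> lmeasurable" and R: "R \<in> lmeasurable"
    unfolding S_def R_def using lmeasurable_superlevel_set cont by blast+
  have "R = (\<lambda>y. (-1) *\<^sub>R y + 2 *\<^sub>R x) ` S"
    unfolding R_def S_def image_def using refl by (auto, metis add_diff_cancel_left' diff_add_cancel)
  then have "measure lebesgue R = measure lebesgue S"
    using measure_lebesgue_affine[of "-1" "2 *\<^sub>R x" S] by simp
  have "U \<subseteq> S \<union> R"
  proof
    fix y assume y: "y \<in> U"
    have "f x = f ((1 - 1/2) *\<^sub>R y + (1/2) *\<^sub>R (2 *\<^sub>R x - y))" by (simp add: algebra_simps)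
    also have "\<dots> \<le> (1 - 1/2) * f y + (1/2) * f (2 *\<^sub>R x - y)"
      using y refl[OF y] by (intro convex_onD[OF cvx[folded U_def]]) auto
    finally show "y \<in> S \<union> R" using y by (auto simp: S_def R_def)
  qed
  then have "measure lebesgue U \<le> measure lebesgue (S \<union> R)"
    using U S R by (intro measure_mono_fmeasurable) auto
  also have "\<dots> \<le> measure lebesgue S + measure lebesgue R"
    using S R by (intro measure_Un_le) auto
  finally show ?thesis
    using \<open>measure lebesgue R = measure lebesgue S\<close> by (simp add: U_def S_def)
qed

lemma convex_on_measure_le_abs_level:
  fixes f :: "'a::euclidean_space \<Rightarrow> real"
  assumes I: "open I" "convex I" "bounded I" and cvx: "convex_on I f" and x: "x \<in> I" "f x < 0"
  shows "measure lebesgue I \<le> 2 ^ DIM('a) * measure lebesgue {y\<in>I. - f x / 4 \<le> \<bar>f y\<bar>}"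
proof -
  define M where "M = - f x"
  define A where "A = {y\<in>I. M/2 \<le> f y}"
  define B where "B = {y\<in>I. M/4 \<le> - f y}"
  define E where "E = {y\<in>I. M/4 \<le> \<bar>f y\<bar>}"
  define T where "T = (\<lambda>y::'a. (1/2) *\<^sub>R y + (1/2) *\<^sub>R x)"
  have Il: "I \<in> lmeasurable" using I by (simp add: lmeasurable_open)
  have cont: "continuous_on I f" using convex_on_continuous[OF I(1) cvx] .
  have A: "A \<in> lmeasurable" and B: "B \<in> lmeasurable" and E: "E \<in> lmeasurable"
    unfolding A_def B_def E_def using Il cont
    by (auto intro!: lmeasurable_superlevel_set continuous_intros)
  have C: "I - A \<in> lmeasurable" using Il A by (simp add: fmeasurable.Diff)
  have "T ` (I - A) \<subseteq> B"
  proof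
    fix y assume "y \<in> T ` (I - A)"
    then obtain z where "z \<in> I - A" and "y = T z" by blast
    then have z: "z \<in> I" "f z < M/2" by (auto simp: A_def)
    have y: "y = (1 - 1/2) *\<^sub>R z + (1/2) *\<^sub>R x" using \<open>y = T z\<close> by (simp add: T_def)
    have "f y \<le> (1 - 1/2) * f z + (1/2) * f x"
      unfolding y using z x by (intro convex_onD[OF cvx]) auto
    moreover have "y \<in> I" unfolding y using z x I(2) by (intro convexD) auto
    ultimately show "y \<in> B" using z by (simp add: B_def M_def)
  qed
  then have "emeasure lebesgue (T ` (I - A)) \<le> emeasure lebesgue B"
    using B by (intro emeasure_mono) auto
  moreover have "emeasure lebesgue (T ` (I - A)) = ennreal (measure lebesgue (I - A) / 2 ^ DIM('a))"
    unfolding T_def using emeasure_lebesgue_affine[of "1/2" "(1/2) *\<^sub>R x" "I - A"] C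
    by (simp add: emeasure_eq_measure2 power_one_over flip: ennreal_mult)
  ultimately have IA: "measure lebesgue (I - A) \<le> 2 ^ DIM('a) * measure lebesgue B"
    using B by (simp add: emeasure_eq_measure2 field_simps)
  have "A \<inter> B = {}" using x by (auto simp: A_def B_def M_def)
  have "measure lebesgue I = measure lebesgue A + measure lebesgue (I - A)"
    using measure_Un2[OF A Il] by (simp add: A_def Un_absorb1)
  also have "\<dots> \<le> 2 ^ DIM('a) * (measure lebesgue A + measure lebesgue B)"
  proof -
    have "measure lebesgue A \<le> 2 ^ DIM('a) * measure lebesgue A"
      by (simp add: mult_le_cancel_right1)
    then show ?thesis using IA by (simp add: distrib_left)
  qed
  also have "measure lebesgue A + measure lebesgue B = measure lebesgue (A \<union> B)"
    using measure_Un3[OF A B] \<open>A \<inter> B = {}\<close> by simp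
  also have "\<dots> \<le> measure lebesgue E"
    using x A B E by (intro measure_mono_fmeasurable) (auto simp: A_def B_def E_def M_def)
  finally show ?thesis by (simp add: E_def M_def)
qed

lemma convex_Lp_powr_measure_ball_le:
  fixes f :: "'a::euclidean_space \<Rightarrow> real"
  assumes ball: "ball x \<delta> \<subseteq> \<Omega>" and cvx: "convex_on \<Omega> f" and \<rho>: "0 \<le> \<rho>"
    and int: "set_nn_integral lebesgue \<Omega> (\<lambda>x. ennreal (\<bar>f x\<bar> powr \<rho>)) \<le> 1" and fx: "0 \<le> f x"
  shows "f x powr \<rho> * measure lebesgue (ball x \<delta>) \<le> 2"
proof -
  define S where "S = {y\<in>ball x \<delta>. f x \<le> f y}"
  have cvx_ball: "convex_on (ball x \<delta>) f" using convex_on_subset[OF cvx ball convex_ball] .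
  have "S \<in> lmeasurable"
    unfolding S_def using convex_on_continuous[OF open_ball cvx_ball]
    by (intro lmeasurable_superlevel_set) auto
  then have "ennreal (f x powr \<rho> * measure lebesgue S) \<le> 1"
    using ball fx \<rho> by (intro order_trans[OF Markov_set_nn_integral_powr int]) (auto simp: S_def)
  then have "f x powr \<rho> * (2 * measure lebesgue S) \<le> 2" by simp
  moreover have "f x powr \<rho> * measure lebesgue (ball x \<delta>) \<le> f x powr \<rho> * (2 * measure lebesgue S)"
    unfolding S_def using convex_on_ball_measure_le_superlevel[OF cvx_ball] by (simp add: mult_left_mono)
  ultimately show ?thesis by linarith
qed

lemma convex_Lp_neg_powr_measure_interior_le:
  fixes f :: "'a::euclidean_space \<Rightarrow> real"
  assumes \<Omega>: "convex \<Omega>" "bounded \<Omega>" and cvx: "convex_on \<Omega> f" and \<rho>: "0 \<le> \<rho>"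
    and int: "set_nn_integral lebesgue \<Omega> (\<lambda>x. ennreal (\<bar>f x\<bar> powr \<rho>)) \<le> 1"
    and x: "x \<in> interior \<Omega>" "f x < 0"
  shows "(- f x / 4) powr \<rho> * measure lebesgue (interior \<Omega>) \<le> 2 ^ DIM('a)"
proof -
  define E where "E = {y\<in>interior \<Omega>. - f x / 4 \<le> \<bar>f y\<bar>}"
  have cvx_int: "convex_on (interior \<Omega>) f" using convex_on_subset[OF cvx interior_subset convex_interior[OF \<Omega>(1)]] .
  have "E \<in> lmeasurable"
    unfolding E_def using convex_on_continuous[OF open_interior cvx_int] \<Omega>
    by (intro lmeasurable_superlevel_set continuous_on_rabs) (auto intro: lmeasurable_interior)
  then have "ennreal ((- f x / 4) powr \<rho> * measure lebesgue E) \<le> 1"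
    using x \<rho> interior_subset
    by (intro order_trans[OF Markov_set_nn_integral_powr int]) (auto simp: E_def)
  then have "(- f x / 4) powr \<rho> * (2 ^ DIM('a) * measure lebesgue E) \<le> 2 ^ DIM('a)" by simp
  moreover have "(- f x / 4) powr \<rho> * measure lebesgue (interior \<Omega>)
      \<le> (- f x / 4) powr \<rho> * (2 ^ DIM('a) * measure lebesgue E)"
    unfolding E_def using x \<Omega>
    by (intro mult_left_mono convex_on_measure_le_abs_level cvx_int) (auto simp: convex_interior bounded_interior)
  ultimately show ?thesis by linarith
qed

lemma le_powr_inverse_of_powr_le:
  fixes y K \<rho> :: real
  assumes "0 \<le> y" "0 < \<rho>" "y powr \<rho> \<le> K"
  shows "y \<le> K powr (1 / \<rho>)"
proof -
  have "y = (y powr \<rho>) powr (1 / \<rho>)" using assms by (simp add: powr_powr)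
  also have "\<dots> \<le> K powr (1 / \<rho>)" using assms by (intro powr_mono2) auto
  finally show ?thesis .
qed

lemma two_div_unit_ball_vol:
  assumes "0 < d"
  shows "2 / unit_ball_vol (real d) = real d * Gamma (real d / 2) / pi powr (real d / 2)"
proof -
  have "real d / 2 \<notin> \<int>\<^sub>\<le>\<^sub>0" using assms nonpos_Ints_nonpos by fastforce
  then have "Gamma (real d / 2 + 1) = (real d / 2) * Gamma (real d / 2)" by (rule Gamma_plus1)
  then show ?thesis unfolding unit_ball_vol_def by (simp add: field_simps)
qed

lemma convex_Lp_upper_bound:
  fixes f :: "'a::euclidean_space \<Rightarrow> real"
  defines "d \<equiv> DIM('a)"
  assumes ball: "ball x \<delta> \<subseteq> \<Omega>" "0 < \<delta>" and cvx: "convex_on \<Omega> f" and \<rho>: "0 < \<rho>"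
    and int: "set_nn_integral lebesgue \<Omega> (\<lambda>x. ennreal (\<bar>f x\<bar> powr \<rho>)) \<le> 1"
  shows "f x \<le> (real d * Gamma (real d / 2) / pi powr (real d / 2)) powr (1 / \<rho>) * \<delta> powr (- real d / \<rho>)"
proof (cases "0 \<le> f x")
  case True
  define c where "c = real d * Gamma (real d / 2) / pi powr (real d / 2)"
  have "f x powr \<rho> * (unit_ball_vol d * \<delta> ^ d) \<le> 2"
    using convex_Lp_powr_measure_ball_le[OF ball(1) cvx _ int True] \<rho> ball(2)
    by (simp add: content_ball d_def)
  then have "f x powr \<rho> \<le> 2 / unit_ball_vol d * \<delta> powr (- real d)"
    using ball(2) by (simp add: field_simps powr_minus powr_realpow)
  also have "\<dots> = c * \<delta> powr (- real d)"
    by (simp add: two_div_unit_ball_vol d_def c_def)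
  finally have "f x \<le> (c * \<delta> powr (- real d)) powr (1 / \<rho>)"
    using True \<rho> by (rule le_powr_inverse_of_powr_le[rotated 2])
  also have "\<dots> = c powr (1 / \<rho>) * \<delta> powr (- real d / \<rho>)"
  proof -
    have "0 \<le> c" by (simp add: c_def d_def)
    then show ?thesis using ball(2) by (simp add: powr_mult powr_powr)
  qed
  finally show ?thesis unfolding c_def .
next
  case False
  moreover have "0 \<le> (real d * Gamma (real d / 2) / pi powr (real d / 2)) powr (1 / \<rho>) * \<delta> powr (- real d / \<rho>)"
    by simp
  ultimately show ?thesis by linarith
qed

lemma convex_Lp_lower_bound:
  fixes f :: "'a::euclidean_space \<Rightarrow> real"
  defines "d \<equiv> DIM('a)"
  assumes \<Omega>: "compact \<Omega>" "convex \<Omega>" "1 / fact d \<le> measure lebesgue \<Omega>"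
    and cvx: "convex_on \<Omega> f" and \<rho>: "1 \<le> \<rho>"
    and int: "set_nn_integral lebesgue \<Omega> (\<lambda>x. ennreal (\<bar>f x\<bar> powr \<rho>)) \<le> 1"
    and x: "x \<in> interior \<Omega>"
  shows "- f x \<le> 4 * (2 ^ d * fact d)"
proof (cases "f x < 0")
  case True
  have "bounded \<Omega>" using \<Omega>(1) by (rule compact_imp_bounded)
  then have "measure lebesgue (interior \<Omega>) = measure lebesgue \<Omega>"
    using negligible_convex_frontier[OF \<Omega>(2)] by (rule measure_interior)
  then have bound: "(- f x / 4) powr \<rho> * measure lebesgue \<Omega> \<le> 2 ^ d"
    using convex_Lp_neg_powr_measure_interior_le[OF \<Omega>(2) \<open>bounded \<Omega>\<close> cvx _ int x True] \<rho> by (simp add: d_def)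
  have "(- f x / 4) powr \<rho> = (- f x / 4) powr \<rho> * (1 / fact d) * fact d" by simp
  also have "\<dots> \<le> (- f x / 4) powr \<rho> * measure lebesgue \<Omega> * fact d"
    using \<Omega>(3) by (intro mult_right_mono mult_left_mono) simp_all
  also have "\<dots> \<le> 2 ^ d * fact d" using bound by (intro mult_right_mono) simp_all
  finally have "- f x / 4 \<le> (2 ^ d * fact d) powr (1 / \<rho>)"
    using True \<rho> by (intro le_powr_inverse_of_powr_le) auto
  also have "\<dots> \<le> (2 ^ d * fact d) powr 1"
    using \<rho> by (intro powr_mono) (simp_all add: mult_ge1_I)
  finally show ?thesis by simp
next
  case False
  moreover have "0 \<le> 4 * (2 ^ d * fact d :: real)" by simp
  ultimately show ?thesis by linarith
qed

lemma Lambda_const_ge_lower_bound_term: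
  assumes "0 < d"
  shows "4 * (2 ^ d * fact d) \<le> Lambda_const d r"
proof -
  have "(4::real) * (2 ^ d * fact d) = fact d * 1 * 2 ^ (d + 2)" by (simp add: power_add)
  also have "\<dots> \<le> fact d * real d * 2 ^ (d + 2)"
    using assms by (intro mult_right_mono mult_left_mono) simp_all
  also have "\<dots> \<le> Lambda_const d r" by (simp add: Lambda_const_def)
  finally show ?thesis .
qed

lemma one_le_Lambda_const:
  assumes "0 < d"
  shows "1 \<le> Lambda_const d r"
proof -
  have "1 \<le> (2::real) ^ d * fact d" by (simp add: mult_ge1_I)
  then show ?thesis using Lambda_const_ge_lower_bound_term[OF assms, of r] by linarith
qed

lemma convex_Lp_abs_bound:
  fixes \<Omega> :: "'a::euclidean_space set" and f :: "'a \<Rightarrow> real"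
  defines "d \<equiv> DIM('a)"
  assumes \<Omega>: "compact \<Omega>" "convex \<Omega>" "1 / fact d \<le> measure lebesgue \<Omega>"
    and cvx: "convex_on \<Omega> f" and \<rho>: "1 \<le> \<rho>"
    and int: "set_nn_integral lebesgue \<Omega> (\<lambda>x. ennreal (\<bar>f x\<bar> powr \<rho>)) \<le> 1"
    and \<delta>: "0 < \<delta>" "\<delta> \<le> 1" and ball: "ball x \<delta> \<subseteq> \<Omega>"
  shows "\<bar>f x\<bar> \<le> Lambda_const d (ereal \<rho>) * \<delta> powr (- real d / \<rho>)"
proof -
  have d: "0 < d" by (simp add: d_def)
  have \<delta>_factor: "1 \<le> \<delta> powr (- real d / \<rho>)"
    using powr_mono'[of "- real d / \<rho>" 0 \<delta>] \<delta> \<rho> by simp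
  have "f x \<le> (real d * Gamma (real d / 2) / pi powr (real d / 2)) powr (1 / \<rho>)
      * \<delta> powr (- real d / \<rho>)"
    using convex_Lp_upper_bound[OF ball \<delta>(1) cvx _ int] \<rho> unfolding d_def by simp
  also have "\<dots> \<le> Lambda_const d (ereal \<rho>) * \<delta> powr (- real d / \<rho>)"
    by (intro mult_right_mono) (simp_all add: Lambda_const_def)
  finally have upper: "f x \<le> Lambda_const d (ereal \<rho>) * \<delta> powr (- real d / \<rho>)" .
  have "x \<in> interior \<Omega>" using interior_maximal[OF ball open_ball] \<delta> by auto
  then have "- f x \<le> Lambda_const d (ereal \<rho>)"
    using convex_Lp_lower_bound[OF \<Omega>[unfolded d_def] cvx \<rho> int]
      Lambda_const_ge_lower_bound_term[OF d, of "ereal \<rho>"]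
    unfolding d_def by fastforce
  also have "\<dots> \<le> Lambda_const d (ereal \<rho>) * \<delta> powr (- real d / \<rho>)"
    using one_le_Lambda_const[OF d, of "ereal \<rho>"] \<delta>_factor
    by (intro mult_le_cancel_left1[THEN iffD2]) auto
  finally show ?thesis using upper by linarith
qed

lemma convex_Lr_ball_abs_bound:
  fixes \<Omega> :: "'a::euclidean_space set" and f :: "'a \<Rightarrow> real"
  assumes \<Omega>: "compact \<Omega>" "convex \<Omega>" "1 / fact DIM('a) \<le> measure lebesgue \<Omega>"
    and r: "1 \<le> r" and \<delta>: "0 < \<delta>" "\<delta> \<le> 1"
    and f: "convex_Lr_ball r \<Omega> f" and x: "x \<in> inner_set \<Omega> \<delta>"
  shows "\<bar>f x\<bar> \<le> Lambda_const DIM('a) r * delta_factor DIM('a) r \<delta>"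
proof (cases r)
  case (real \<rho>)
  have cvx: "convex_on \<Omega> f" and int: "set_nn_integral lebesgue \<Omega> (\<lambda>x. ennreal (\<bar>f x\<bar> powr \<rho>)) \<le> 1"
    using f by (simp_all add: convex_Lr_ball_def real)
  have "ball x \<delta> \<subseteq> \<Omega>"
    using x by (intro ball_subset_of_le_infdist_frontier) (auto simp: inner_set_def)
  then show ?thesis
    using convex_Lp_abs_bound[OF \<Omega> cvx _ int \<delta>] r by (simp add: delta_factor_def real)
next
  case PInf
  then have "\<bar>f x\<bar> \<le> 1" using f x by (simp add: convex_Lr_ball_def inner_set_def)
  then show ?thesis using PInf one_le_Lambda_const[of "DIM('a)" r] by (simp add: delta_factor_def)
qed (use r in simp)

lemma Lambda_const_le_max:
  assumes "1 \<le> r"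
  shows "Lambda_const d r
    \<le> max (max (real d * Gamma (real d / 2) / pi powr (real d / 2)) 1) (fact d * real d * 2 ^ (d + 2))"
proof (cases r)
  case (real \<rho>)
  define c where "c = real d * Gamma (real d / 2) / pi powr (real d / 2)"
  have "0 \<le> c" by (cases "d = 0") (simp_all add: c_def)
  have \<rho>: "1 \<le> \<rho>" using assms real by simp
  have "c powr (1 / \<rho>) \<le> max c 1"
  proof (cases "1 \<le> c")
    case True
    then have "c powr (1 / \<rho>) \<le> c powr 1" using \<rho> by (intro powr_mono) auto
    then show ?thesis using True by simp
  next
    case False
    then show ?thesis using \<open>0 \<le> c\<close> \<rho> by (simp add: powr_le1)
  qed
  then show ?thesis by (simp add: Lambda_const_def real c_def)
qed (use assms in \<open>simp_all add: Lambda_const_def\<close>)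

theorem mainTheorem6:
  shows "(\<exists>\<Lambda>::real. \<forall>(\<Omega>::'a::euclidean_space set) r \<delta> f x.
            compact \<Omega> \<and> convex \<Omega> \<and> \<Omega> \<subseteq> cbox 0 One \<and>
            measure lebesgue \<Omega> \<ge> 1 / fact DIM('a) \<and>
            1 \<le> r \<and> 0 < \<delta> \<and> \<delta> \<le> 1 \<and> convex_Lr_ball r \<Omega> f \<and> x \<in> inner_set \<Omega> \<delta>
            \<longrightarrow> \<bar>f x\<bar> \<le> \<Lambda> * delta_factor DIM('a) r \<delta>)
       \<and> (\<forall>(\<Omega>::'a::euclidean_space set) r \<delta> f x.
            compact \<Omega> \<and> convex \<Omega> \<and> \<Omega> \<subseteq> cbox 0 One \<and>
            measure lebesgue \<Omega> \<ge> 1 / fact DIM('a) \<and>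
            1 \<le> r \<and> 0 < \<delta> \<and> \<delta> \<le> 1 \<and> convex_Lr_ball r \<Omega> f \<and> x \<in> inner_set \<Omega> \<delta>
            \<longrightarrow> \<bar>f x\<bar> \<le> Lambda_const DIM('a) r * delta_factor DIM('a) r \<delta>)"
proof -
  define d where "d = DIM('a)"
  define \<Lambda> where "\<Lambda> =
    max (max (real d * Gamma (real d / 2) / pi powr (real d / 2)) 1) (fact d * real d * 2 ^ (d + 2))"
  have uniform: "Lambda_const d r * delta_factor d r \<delta> \<le> \<Lambda> * delta_factor d r \<delta>"
    if "1 \<le> r" for r \<delta>
    using Lambda_const_le_max[OF that, of d]
    by (intro mult_right_mono) (simp_all add: \<Lambda>_def delta_factor_def)
  show ?thesis
    using convex_Lr_ball_abs_bound uniform unfolding d_def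
    by (blast intro: order_trans)
qed

end
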